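(* Let $p$ be a prime and $t\in\mathbb Z/(p)$ nonzero. Let $j_0,\dots,j_{p-1}\in\mathbb Z/(p)$ (indices read in $\mathbb Z/(p)$) satisfy $j_i=j_{-i}$ and $j_{t^s i}=t^s j_i-(t^s-1)j_0$ for all $i\in\mathbb Z/(p)$ and $s\in\mathbb Z$, and suppose $j_i\ne j_k$ for some $i\ne k$. Define $\sigma_{(i,j)}(k,l)=(tk+j,\ t(l-j_{tk+j-i}))$ on $(\mathbb Z/(p))^2$ and $r((i,j),(k,l))=(\sigma_{(i,j)}(k,l),\sigma^{-1}_{\sigma_{(i,j)}(k,l)}(i,j))$. Then $((\mathbb Z/(p))^2,r)$ is a simple solution of the YBE.
   Context: A solution of the YBE is a pair $(X,r)$, $X$ nonempty, $r:X\times X\to X\times X$, $r(x,y)=(\sigma_x(y),\gamma_y(x))$, with $r^2=\mathrm{id}$, all $\sigma_x,\gamma_x$ bijective, and $r_{12}r_{23}r_{12}=r_{23}r_{12}r_{23}$ on $X^3$. A homomorphism of solutions $f:(X,r)\to(Y,s)$ (with $s(t,z)=(\sigma'_t(z),\gamma'_z(t))$) is a map with $f(\sigma_x(y))=\sigma'_{f(x)}(f(y))$; $(X,r)$ is simple if $|X|>1$ and every surjective homomorphism of solutions $f:(X,r)\to(Y,s)$ is bijective or has $|Y|=1$. *)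

theory Defs
  imports Main "Berlekamp_Zassenhaus.Finite_Field"
begin

definition ybe_sigma :: "('a \<times> 'a \<Rightarrow> 'a \<times> 'a) \<Rightarrow> 'a \<Rightarrow> 'a \<Rightarrow> 'a" where
  "ybe_sigma r x y = fst (r (x, y))"

definition ybe_gamma :: "('a \<times> 'a \<Rightarrow> 'a \<times> 'a) \<Rightarrow> 'a \<Rightarrow> 'a \<Rightarrow> 'a" where
  "ybe_gamma r y x = snd (r (x, y))"

definition ybe_solution :: "'a set \<Rightarrow> ('a \<times> 'a \<Rightarrow> 'a \<times> 'a) \<Rightarrow> bool" where
  "ybe_solution X r \<longleftrightarrow>
     X \<noteq> {} \<and>
     (\<forall>x\<in>X. \<forall>y\<in>X. r (x, y) \<in> X \<times> X) \<and>
     (\<forall>x\<in>X. \<forall>y\<in>X. r (r (x, y)) = (x, y)) \<and>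
     (\<forall>x\<in>X. bij_betw (ybe_sigma r x) X X) \<and>
     (\<forall>y\<in>X. bij_betw (ybe_gamma r y) X X) \<and>
     (\<forall>x\<in>X. \<forall>y\<in>X. \<forall>z\<in>X.
        (let r12 = (\<lambda>(a, b, c). (fst (r (a, b)), snd (r (a, b)), c));
             r23 = (\<lambda>(a, b, c). (a, fst (r (b, c)), snd (r (b, c))))
         in r12 (r23 (r12 (x, y, z))) = r23 (r12 (r23 (x, y, z)))))"

definition ybe_hom :: "'a set \<Rightarrow> ('a \<times> 'a \<Rightarrow> 'a \<times> 'a) \<Rightarrow> 'b set \<Rightarrow> ('b \<times> 'b \<Rightarrow> 'b \<times> 'b)
    \<Rightarrow> ('a \<Rightarrow> 'b) \<Rightarrow> bool" where
  "ybe_hom X r Y s f \<longleftrightarrow>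
     (\<forall>x\<in>X. f x \<in> Y) \<and>
     (\<forall>x\<in>X. \<forall>y\<in>X. f (ybe_sigma r x y) = ybe_sigma s (f x) (f y))"

text \<open>The target solutions (Y, s) range over subsets of an arbitrary
  type 'b, passed as TYPE('b); a statement with a free 'b is universally
  quantified over all types, i.e. over all possible targets.\<close>
definition ybe_simple :: "'b itself \<Rightarrow> 'a set \<Rightarrow> ('a \<times> 'a \<Rightarrow> 'a \<times> 'a) \<Rightarrow> bool" where
  "ybe_simple (_ :: 'b itself) X r \<longleftrightarrow>
     ybe_solution X r \<and> (\<exists>x\<in>X. \<exists>y\<in>X. x \<noteq> y) \<and>
     (\<forall>(Y :: 'b set) s f. ybe_solution Y s \<and> ybe_hom X r Y s f \<and> f ` X = Y
        \<longrightarrow> bij_betw f X Y \<or> (\<exists>y. Y = {y}))"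

end

theory Submission
  imports Defs
begin

text \<open>Each \<open>\<sigma>\<^sub>x\<close> is an affine bijection with an explicit inverse, which makes \<open>r\<close> explicit;
  \<open>r\<close> is then involutive because \<open>J\<close> is even, and the two sides of the braid relation agree
  once \<open>J (t x) = t J x - (t - 1) J 0\<close> is used.

  If a homomorphism \<open>f\<close> identifies distinct points \<open>(i, j)\<close> and \<open>(i', j')\<close>, applying
  \<open>\<sigma>\<^sub>(\<^sub>i\<^sub>,\<^sub>j\<^sub>)\<close> and \<open>\<sigma>\<^sub>(\<^sub>i\<^sub>'\<^sub>,\<^sub>j\<^sub>'\<^sub>)\<close> to a common argument shows that \<open>f\<close> also identifies
  \<open>(a, b)\<close> with \<open>(a + j' - j, b + t (J (a - i) - J (a + j' - j - i')))\<close> for all \<open>a, b\<close>.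
  Choosing \<open>a\<close> so that the two values of \<open>J\<close> agree gives two identified points with the same
  second coordinate. Since \<open>J\<close> is not periodic, \<open>f\<close> is then invariant under a nonzero
  translation of the second coordinate on a whole fibre, hence constant on that fibre because
  any nonzero element generates the additive group of \<open>\<int>/(p)\<close>; transporting along \<open>\<sigma>\<close> makes
  \<open>f\<close> constant.\<close>

lemma periodic_imp_const:
  fixes e :: "'a::field"
  assumes prime_field: "\<forall>x::'a. \<exists>n. x = of_nat n"
    and e: "e \<noteq> 0" and periodic: "\<And>b. g (b + e) = g b"
  shows "g b = g b'"
proof -
  have multiple: "g (b + of_nat n * e) = g b" for n
  proof (induction n)
    case (Suc n)
    have "g (b + of_nat (Suc n) * e) = g (b + of_nat n * e + e)"
      by (simp add: algebra_simps)
    with Suc periodic show ?case by simp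
  qed simp
  obtain n where "(b' - b) / e = of_nat n" using prime_field by blast
  then have "b' = b + of_nat n * e" using e by (simp add: field_simps)
  then show ?thesis using multiple by simp
qed

lemma char_two_elements:
  fixes x :: "'a::comm_semiring_1"
  assumes "\<forall>x::'a. \<exists>n. x = of_nat n" and two: "(2::'a) = 0"
  shows "x = 0 \<or> x = 1"
proof -
  obtain n where "x = of_nat n" using assms(1) by blast
  also have "of_nat n = (of_nat (2 * (n div 2) + n mod 2) :: 'a)" by simp
  also have "\<dots> = of_nat (n mod 2)"
    by (simp only: of_nat_add of_nat_mult of_nat_numeral two mult_zero_left add_0)
  finally show ?thesis by (cases "n mod 2 = 0") (auto simp: mod_2_eq_odd)
qed

locale affine_ybe =
  fixes t :: "'a::field"
    and J :: "'a \<Rightarrow> 'a"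
    and sig :: "'a \<times> 'a \<Rightarrow> 'a \<times> 'a \<Rightarrow> 'a \<times> 'a"
    and r :: "('a \<times> 'a) \<times> ('a \<times> 'a) \<Rightarrow> ('a \<times> 'a) \<times> ('a \<times> 'a)"
  assumes t_nonzero: "t \<noteq> 0"
    and J_even: "J (- x) = J x"
    and J_scale: "J (t * x) = t * J x - (t - 1) * J 0"
    and sig_eq: "sig (i, j) (k, l) = (t * k + j, t * (l - J (t * k + j - i)))"
    and r_eq: "r (u, v) = (sig u v, inv_into UNIV (sig (sig u v)) u)"
begin

lemma inj_sig: "inj (sig x)"
proof (rule injI)
  fix y z assume eq: "sig x y = sig x z"
  obtain i j k l k' l' where "x = (i, j)" "y = (k, l)" "z = (k', l')"
    by (metis surj_pair)
  with eq t_nonzero show "y = z" by (auto simp: sig_eq)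
qed

lemma bij_sig: "bij (sig x)"
proof -
  obtain i j where x: "x = (i, j)" by fastforce
  have "sig x ((a - j) / t, b / t + J (a - i)) = (a, b)" for a b
  proof -
    have "t * ((a - j) / t) + j = a" using t_nonzero by simp
    then show ?thesis using t_nonzero by (simp add: x sig_eq field_simps)
  qed
  then have "surj (sig x)" by (metis surj_def surj_pair)
  with inj_sig show ?thesis by (simp add: bij_def)
qed

lemma r_explicit:
  assumes "m = t * k + j - i"
  shows "r ((i, j), (k, l)) = ((t * k + j, t * (l - J m)), (i / t - l + J m, j / t + J m))"
proof -
  have sig_ij: "sig (i, j) (k, l) = (t * k + j, t * (l - J m))"
    by (simp add: sig_eq assms)
  have "t * (i / t - l + J m) + t * (l - J m) - (t * k + j) = - m"
    using t_nonzero by (simp add: assms field_simps)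
  then have "sig (t * k + j, t * (l - J m)) (i / t - l + J m, j / t + J m)
      = (t * (i / t - l + J m) + t * (l - J m), t * (j / t + J m - J m))"
    by (simp only: sig_eq J_even)
  also have "\<dots> = (i, j)"
    using t_nonzero by (simp add: field_simps)
  finally have sig_back: "sig (t * k + j, t * (l - J m)) (i / t - l + J m, j / t + J m) = (i, j)" .
  have "inv_into UNIV (sig (t * k + j, t * (l - J m))) (i, j) = (i / t - l + J m, j / t + J m)"
    by (rule inv_into_f_eq[OF inj_sig UNIV_I sig_back])
  then show ?thesis by (simp add: r_eq sig_ij)
qed

lemma r_involutive: "r (r (x, y)) = (x, y)"
proof -
  obtain i j k l where xy: "x = (i, j)" "y = (k, l)" by fastforce
  define m where "m = t * k + j - i"
  have "r (r (x, y)) = r ((t * k + j, t * (l - J m)), (i / t - l + J m, j / t + J m))"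
    by (simp add: xy r_explicit m_def)
  also have "\<dots> = ((t * (i / t - l + J m) + t * (l - J m), t * (j / t + J m - J (- m))),
      ((t * k + j) / t - (j / t + J m) + J (- m), t * (l - J m) / t + J (- m)))"
    by (rule r_explicit) (use t_nonzero in \<open>simp add: m_def field_simps\<close>)
  also have "\<dots> = (x, y)"
    using t_nonzero by (simp add: xy J_even field_simps)
  finally show ?thesis .
qed

lemma bij_gamma: "bij (\<lambda>x. snd (r (x, y)))"
proof -
  obtain k l where y: "y = (k, l)" by fastforce
  define g where "g = (\<lambda>(u, v). let m = t * (k - u + v - l) in (t * (u + l - J m), t * (v - J m)))"
  have g_gamma: "g (snd (r (x, y))) = x" for x
  proof -
    obtain i j where x: "x = (i, j)" by fastforce
    define m where "m = t * k + j - i"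
    have "t * (k - (i / t - l + J m) + (j / t + J m) - l) = m"
      using t_nonzero by (simp add: m_def field_simps)
    then have "g (i / t - l + J m, j / t + J m) = (t * (i / t - l + J m + l - J m), t * (j / t + J m - J m))"
      by (simp add: g_def Let_def)
    also have "\<dots> = x" using t_nonzero by (simp add: x)
    finally show ?thesis by (simp add: x y r_explicit m_def)
  qed
  have gamma_g: "snd (r (g z, y)) = z" for z
  proof -
    obtain u v where z: "z = (u, v)" by fastforce
    define m where "m = t * (k - u + v - l)"
    have gz: "g z = (t * (u + l - J m), t * (v - J m))" by (simp add: g_def z m_def Let_def)
    have "r (g z, y) = ((t * k + t * (v - J m), t * (l - J m)),
        (t * (u + l - J m) / t - l + J m, t * (v - J m) / t + J m))"
      unfolding gz y by (rule r_explicit) (simp add: m_def field_simps)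
    then show ?thesis using t_nonzero by (simp add: z)
  qed
  show ?thesis by (rule o_bij[of g]) (auto simp: g_gamma gamma_g)
qed

lemma braid_relation:
  "let r12 = (\<lambda>(a, b, c). (fst (r (a, b)), snd (r (a, b)), c));
       r23 = (\<lambda>(a, b, c). (a, fst (r (b, c)), snd (r (b, c))))
   in r12 (r23 (r12 (x, y, z))) = r23 (r12 (r23 (x, y, z)))"
proof -
  obtain x1 x2 y1 y2 z1 z2 where xyz: "x = (x1, x2)" "y = (y1, y2)" "z = (z1, z2)"
    by (metis surj_pair)
  define m where "m = t * z1 + y2"
  define d where "d = (x2 - x1) / t"
  define A' where "A' = J (t * (y1 + d))"
  define A where "A = J (y1 + d)"
  define B where "B = J (m + d)"
  define C where "C = J (m - y1)"
  define B' where "B' = J (t * (m + d))"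
  define C' where "C' = J (t * (m - y1))"
  have e1: "r ((x1, x2), (y1, y2)) = ((t * y1 + x2, t * (y2 - A')), (x1 / t - y2 + A', x2 / t + A'))"
    unfolding A'_def by (rule r_explicit) (use t_nonzero in \<open>simp add: d_def field_simps\<close>)
  have e2: "r ((x1 / t - y2 + A', x2 / t + A'), (z1, z2)) = ((t * z1 + (x2 / t + A'), t * (z2 - B)),
      ((x1 / t - y2 + A') / t - z2 + B, (x2 / t + A') / t + B))"
    unfolding B_def by (rule r_explicit) (use t_nonzero in \<open>simp add: m_def d_def field_simps\<close>)
  have e3: "r ((t * y1 + x2, t * (y2 - A')), (t * z1 + (x2 / t + A'), t * (z2 - B))) =
      ((t * (t * z1 + (x2 / t + A')) + t * (y2 - A'), t * (t * (z2 - B) - C')),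
       ((t * y1 + x2) / t - t * (z2 - B) + C', t * (y2 - A') / t + C'))"
    unfolding C'_def by (rule r_explicit) (use t_nonzero in \<open>simp add: m_def d_def field_simps\<close>)
  have f1: "r ((y1, y2), (z1, z2)) = ((t * z1 + y2, t * (z2 - C)), (y1 / t - z2 + C, y2 / t + C))"
    unfolding C_def by (rule r_explicit) (simp add: m_def)
  have f2: "r ((x1, x2), (t * z1 + y2, t * (z2 - C))) = ((t * (t * z1 + y2) + x2, t * (t * (z2 - C) - B')),
      (x1 / t - t * (z2 - C) + B', x2 / t + B'))"
    unfolding B'_def by (rule r_explicit) (use t_nonzero in \<open>simp add: m_def d_def field_simps\<close>)
  have f3: "r ((x1 / t - t * (z2 - C) + B', x2 / t + B'), (y1 / t - z2 + C, y2 / t + C))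
      = ((t * (y1 / t - z2 + C) + (x2 / t + B'), t * (y2 / t + C - A)),
         ((x1 / t - t * (z2 - C) + B') / t - (y2 / t + C) + A, (x2 / t + B') / t + A))"
    unfolding A_def by (rule r_explicit) (use t_nonzero in \<open>simp add: m_def d_def field_simps\<close>)
  have scaled: "A' = t * A - (t - 1) * J 0" "C' = t * C - (t - 1) * J 0" "B' = t * B - (t - 1) * J 0"
    unfolding A'_def A_def C'_def C_def B'_def B_def by (rule J_scale)+
  show ?thesis
    unfolding xyz Let_def prod.case e1 e2 e3 f1 f2 f3 fst_conv snd_conv
    unfolding scaled prod_eq_iff
    using t_nonzero by (simp add: field_simps)
qed

theorem ybe_solution: "ybe_solution UNIV r"
proof -
  have "ybe_sigma r x = sig x" for x by (simp add: ybe_sigma_def r_eq fun_eq_iff)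
  moreover have "ybe_gamma r y = (\<lambda>x. snd (r (x, y)))" for y by (simp add: ybe_gamma_def fun_eq_iff)
  ultimately show ?thesis
    unfolding ybe_solution_def using bij_sig bij_gamma r_involutive braid_relation by auto
qed

end

locale affine_ybe_prime_field = affine_ybe t J sig r
  for t :: "'a::field" and J sig r +
  assumes of_nat_surj: "\<forall>x::'a. \<exists>n. x = of_nat n"
    and J_nonconst: "\<exists>i k. J i \<noteq> J k"
begin

lemma J_not_periodic: "\<delta> \<noteq> 0 \<Longrightarrow> \<exists>a. J (a + \<delta>) \<noteq> J a"
  using periodic_imp_const[OF of_nat_surj] J_nonconst by blast

context
  fixes f :: "'a \<times> 'a \<Rightarrow> 'b"
  assumes sig_cong: "\<And>x x' y y'. f x = f x' \<Longrightarrow> f y = f y' \<Longrightarrow> f (sig x y) = f (sig x' y')"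
begin

lemma collapse_propagates:
  assumes "f (i, j) = f (i', j')"
  shows "f (a, b) = f (a + (j' - j), b + t * (J (a - i) - J (a + (j' - j) - i')))"
proof -
  define k where "k = (a - j) / t"
  define l where "l = b / t + J (a - i)"
  have k: "t * k + j = a" "t * k + j' = a + (j' - j)"
    using t_nonzero by (simp_all add: k_def field_simps)
  have "sig (i, j) (k, l) = (a, t * (l - J (a - i)))" by (simp only: sig_eq k)
  then have sig_ij: "sig (i, j) (k, l) = (a, b)" using t_nonzero by (simp add: l_def)
  have "sig (i', j') (k, l) = (a + (j' - j), t * (l - J (a + (j' - j) - i')))"
    by (simp only: sig_eq k)
  then have sig_ij': "sig (i', j') (k, l) = (a + (j' - j), b + t * (J (a - i) - J (a + (j' - j) - i')))"
    using t_nonzero by (simp add: l_def field_simps)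
  from sig_cong[OF assms refl] show ?thesis by (metis sig_ij sig_ij')
qed

lemma const_if_const_on_fibre:
  assumes fibre: "\<And>b b'. f (a, b) = f (a, b')"
  shows "f u = f v"
proof -
  have "sig (0, c - t * a) (a, l / t + J c) = (c, l)" for c l
    using t_nonzero by (simp add: sig_eq)
  then have all_fibres: "f (c, l) = f (c, l')" for c l l'
    using sig_cong[OF refl fibre] by metis
  have "f (sig (0, c) (0, 0)) = f (sig (0, c') (0, 0))" for c c'
    by (rule sig_cong[OF all_fibres refl])
  then have "f (c, - t * J c) = f (c', - t * J c')" for c c'
    by (simp add: sig_eq)
  then show ?thesis
    by (metis all_fibres surj_pair)
qed

lemma const_if_collapse_same_snd:
  assumes "f (i, j) = f (i', j)" and "i \<noteq> i'"
  shows "f u = f v"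
proof -
  obtain a0 where "J (a0 + (i - i')) \<noteq> J a0" using J_not_periodic \<open>i \<noteq> i'\<close> by fastforce
  then have "J (a0 + i - i) \<noteq> J (a0 + i - i')" by (simp add: algebra_simps)
  then have "t * (J (a0 + i - i) - J (a0 + i - i')) \<noteq> 0" using t_nonzero by simp
  moreover have "f (a0 + i, b + t * (J (a0 + i - i) - J (a0 + i - i'))) = f (a0 + i, b)" for b
    using collapse_propagates[OF assms(1), of "a0 + i" b] by simp
  ultimately have "f (a0 + i, b) = f (a0 + i, b')" for b b'
    by (rule periodic_imp_const[OF of_nat_surj])
  then show ?thesis by (rule const_if_const_on_fibre)
qed

lemma const_if_collapse_symmetric:
  assumes "f (i, j) = f (i', j')" and "j \<noteq> j'" and "J (a - i) = J (a + (j' - j) - i')"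
  shows "f u = f v"
proof (rule const_if_collapse_same_snd)
  show "f (a, 0) = f (a + (j' - j), 0)"
    using collapse_propagates[OF assms(1), of a 0] assms(3) by simp
  show "a \<noteq> a + (j' - j)" using assms(2) by simp
qed

lemma const_if_collapse_diagonal:
  assumes "f (i, j) = f (i', j')" and "j \<noteq> j'" and "i' - i = j' - j"
  shows "f u = f v"
  by (rule const_if_collapse_symmetric[OF assms(1,2), of i]) (use assms(3) in \<open>simp add: algebra_simps\<close>)

lemma const_if_collapse_char_two:
  assumes collapse: "f (i, j) = f (i', j')" and "j \<noteq> j'" and two: "(2::'a) = 0"
  shows "f u = f v"
proof -
  have field_elements: "x = 0 \<or> x = 1" for x :: 'a
    by (rule char_two_elements[OF of_nat_surj two])
  with \<open>j \<noteq> j'\<close> have j': "j' - j = 1" by (metis eq_iff_diff_eq_0)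
  show ?thesis
  proof (cases "i' = i")
    case False
    with field_elements have "i' - i = j' - j" by (metis j' eq_iff_diff_eq_0)
    with collapse \<open>j \<noteq> j'\<close> show ?thesis by (rule const_if_collapse_diagonal)
  next
    case True
    define e where "e = t * (J 0 - J 1)"
    have collapse': "f (i, 0) = f (i + 1, e)"
      using collapse_propagates[OF collapse, of i 0] by (simp add: j' True e_def)
    show ?thesis
    proof (cases "e = 0")
      case True
      with collapse' have "f (i, 0) = f (i + 1, 0)" by simp
      then show ?thesis by (rule const_if_collapse_same_snd) simp
    next
      case False
      with field_elements collapse' have "f (i, 0) = f (i + 1, 1)" by metis
      then show ?thesis by (rule const_if_collapse_diagonal) simp_all
    qed
  qed
qed

lemma const_if_not_inj:
  assumes "f x = f x'" and "x \<noteq> x'"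
  shows "f u = f v"
proof -
  obtain i j i' j' where x: "x = (i, j)" "x' = (i', j')" by fastforce
  with assms have collapse: "f (i, j) = f (i', j')" and "(i, j) \<noteq> (i', j')" by simp_all
  consider "j = j'" | "j \<noteq> j'" "(2::'a) \<noteq> 0" | "j \<noteq> j'" "(2::'a) = 0" by blast
  then show ?thesis
  proof cases
    case 1
    with collapse \<open>(i, j) \<noteq> (i', j')\<close> show ?thesis
      using const_if_collapse_same_snd by blast
  next
    case 2
    text \<open>At the midpoint \<open>a\<close> the two arguments of \<open>J\<close> are opposite, so evenness applies.\<close>
    define a where "a = (i + i' - (j' - j)) / 2"
    have "a + (j' - j) - i' = - (a - i)" using 2 by (simp add: a_def field_simps)
    then have "J (a - i) = J (a + (j' - j) - i')" by (metis J_even)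
    with collapse \<open>j \<noteq> j'\<close> show ?thesis by (rule const_if_collapse_symmetric)
  next
    case 3
    with collapse show ?thesis by (blast intro: const_if_collapse_char_two)
  qed
qed

end

theorem ybe_simple: "ybe_simple TYPE('b) UNIV r"
proof -
  have "((0::'a), (0::'a)) \<noteq> (1, 0)" by simp
  then have two_points: "\<exists>x\<in>UNIV. \<exists>y\<in>UNIV. x \<noteq> (y :: 'a \<times> 'a)" by blast
  have "bij_betw f UNIV Y \<or> (\<exists>y. Y = {y})"
    if "ybe_hom UNIV r Y s f" and image: "f ` UNIV = Y" for Y :: "'b set" and s f
  proof (cases "inj f")
    case True
    then show ?thesis using image by (simp add: bij_betw_def)
  next
    case False
    then obtain x x' where "f x = f x'" "x \<noteq> x'" unfolding inj_def by blast
    moreover have "f (sig x y) = ybe_sigma s (f x) (f y)" for x y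
      using \<open>ybe_hom UNIV r Y s f\<close> unfolding ybe_hom_def ybe_sigma_def r_eq by (metis UNIV_I fst_conv)
    ultimately have "f u = f (0, 0)" for u
      using const_if_not_inj[of f] by metis
    then have "Y = {f (0, 0)}" using image by auto
    then show ?thesis by blast
  qed
  with ybe_solution two_points show ?thesis unfolding ybe_simple_def by blast
qed

end

theorem mainTheorem10:
  fixes t :: "'p::prime_card mod_ring"
    and J :: "'p mod_ring \<Rightarrow> 'p mod_ring"
    and sig :: "'p mod_ring \<times> 'p mod_ring \<Rightarrow> 'p mod_ring \<times> 'p mod_ring \<Rightarrow> 'p mod_ring \<times> 'p mod_ring"
    and r :: "('p mod_ring \<times> 'p mod_ring) \<times> ('p mod_ring \<times> 'p mod_ring)
              \<Rightarrow> ('p mod_ring \<times> 'p mod_ring) \<times> ('p mod_ring \<times> 'p mod_ring)"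
  assumes "t \<noteq> 0"
    and "\<forall>i. J i = J (- i)"
    and "\<forall>i. \<forall>s::int. J (t powi s * i) = t powi s * J i - (t powi s - 1) * J 0"
    and "\<exists>i k. i \<noteq> k \<and> J i \<noteq> J k"
    and "\<forall>i j k l. sig (i, j) (k, l) = (t * k + j, t * (l - J (t * k + j - i)))"
    and "\<forall>x y. r (x, y) = (sig x y, inv_into UNIV (sig (sig x y)) x)"
  shows "ybe_simple TYPE('b) (UNIV :: ('p mod_ring \<times> 'p mod_ring) set) r"
proof -
  interpret affine_ybe_prime_field t J sig r
  proof
    show "t \<noteq> 0" by (fact assms(1))
    show "J (- x) = J x" for x using assms(2) by metis
    show "J (t * x) = t * J x - (t - 1) * J 0" for x
      using assms(3) by (metis power_int_1_right)
    show "sig (i, j) (k, l) = (t * k + j, t * (l - J (t * k + j - i)))" for i j k l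
      using assms(5) by blast
    show "r (u, v) = (sig u v, inv_into UNIV (sig (sig u v)) u)" for u v
      using assms(6) by blast
    show "\<forall>x::'p mod_ring. \<exists>n. x = of_nat n" using surj_of_nat_mod_ring by blast
    show "\<exists>i k. J i \<noteq> J k" using assms(4) by blast
  qed
  show ?thesis by (fact ybe_simple)
qed

end
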